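(* Let $X$ be a set, $A$ a commutative unital $\mathbb{R}$-algebra, $\bar{}\colon A\to\mathbb{R}^X$ a unital $\mathbb{R}$-algebra homomorphism, and $Q\subseteq A$ an archimedean quadratic module. Let $Y$, $m\colon X\to Y$, $K_{Q,X}$, $K_{Q,Y}$ be as in the context. (1) If $m(K_{Q,X})=K_{Q,Y}$, then for every $f\in A$: if $\bar f(x)>0$ for all $x\in K_{Q,X}$, then $f\in Q$. (2) If $\overline{m(K_{Q,X})}=K_{Q,Y}$ (closure taken in $Y$), then for every $f\in A$: if $\bar f(x)\ge 0$ for all $x\in K_{Q,X}$, then $f+\epsilon\in Q$ for every real $\epsilon>0$.
   Context: A quadratic module of $A$ is a subset $Q\subseteq A$ with $Q+Q\subseteq Q$, $a^2Q\subseteq Q$ for all $a\in A$, and $1\in Q$. $Q$ is archimedean if for every $a\in A$ there is an integer $n\ge1$ with $n+a\in Q$. $K_{Q,X}:=\{x\in X\mid \bar g(x)\ge 0\ \forall g\in Q\}$. $Y$ denotes the set of all unital $\mathbb{R}$-algebra homomorphisms $y\colon A\to\mathbb{R}$; for $a\in A$, $\hat a\colon Y\to\mathbb{R}$ is $\hat a(y)=y(a)$, and $Y$ carries the weakest topology making all $\hat a$ continuous. $K_{Q,Y}:=\{y\in Y\mid \hat g(y)\ge0\ \forall g\in Q\}$. The map $m\colon X\to Y$ is $m(x)(a)=\bar a(x)$. *)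

theory Defs
  imports "HOL-Analysis.Analysis"
begin

text \<open>The set X is a carrier set of type 'x set;
 elements of R^X are represented by functions 'x \<Rightarrow> real (only values on X matter).\<close>

definition quadratic_module :: "('a::{comm_ring_1,real_algebra_1}) set \<Rightarrow> bool" where
  "quadratic_module Q \<longleftrightarrow>
     (\<forall>p\<in>Q. \<forall>q\<in>Q. p + q \<in> Q) \<and> (\<forall>a. \<forall>q\<in>Q. a^2 * q \<in> Q) \<and> 1 \<in> Q"

definition archimedean_qm :: "('a::{comm_ring_1,real_algebra_1}) set \<Rightarrow> bool" where
  "archimedean_qm Q \<longleftrightarrow> (\<forall>a. \<exists>n::nat. n \<ge> 1 \<and> of_nat n + a \<in> Q)"

definition alg_hom_to_funs :: "'x set \<Rightarrow> (('a::{comm_ring_1,real_algebra_1}) \<Rightarrow> 'x \<Rightarrow> real) \<Rightarrow> bool" where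
  "alg_hom_to_funs X bar \<longleftrightarrow> (\<forall>x\<in>X.
      (\<forall>a b. bar (a + b) x = bar a x + bar b x) \<and>
      (\<forall>a b. bar (a * b) x = bar a x * bar b x) \<and>
      (\<forall>r a. bar (r *\<^sub>R a) x = r * bar a x) \<and>
      bar 1 x = 1)"

text \<open>Y: all unital R-algebra homomorphisms A \<rightarrow> R; as a subset of 'a \<Rightarrow> real it carries
 the product topology, i.e. the weakest topology making all evaluations continuous.\<close>
definition char_space :: "(('a::{comm_ring_1,real_algebra_1}) \<Rightarrow> real) set" where
  "char_space = {y. (\<forall>a b. y (a + b) = y a + y b) \<and> (\<forall>a b. y (a * b) = y a * y b) \<and>
                    (\<forall>r a. y (r *\<^sub>R a) = r * y a) \<and> y 1 = 1}"

definition K_X :: "('a::{comm_ring_1,real_algebra_1}) set \<Rightarrow> 'x set \<Rightarrow> ('a \<Rightarrow> 'x \<Rightarrow> real) \<Rightarrow> 'x set" where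
  "K_X Q X bar = {x\<in>X. \<forall>g\<in>Q. bar g x \<ge> 0}"

definition K_Y :: "('a::{comm_ring_1,real_algebra_1}) set \<Rightarrow> ('a \<Rightarrow> real) set" where
  "K_Y Q = {y\<in>char_space. \<forall>g\<in>Q. y g \<ge> 0}"

definition evmap :: "(('a::{comm_ring_1,real_algebra_1}) \<Rightarrow> 'x \<Rightarrow> real) \<Rightarrow> 'x \<Rightarrow> ('a \<Rightarrow> real)" where
  "evmap bar x = (\<lambda>a. bar a x)"

end

theory Submission
  imports Defs
begin

text \<open>Both parts rest on Jacobi's representation theorem: if \<open>Q\<close> is archimedean and
  \<open>f \<notin> Q\<close>, some character \<open>y \<in> K_Y Q\<close> has \<open>y f \<le> 0\<close>. To find it, enlarge \<open>Q\<close>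
  to \<open>P = {q - s f}\<close>, with \<open>q\<close> in the \<open>\<epsilon>\<close>-closure \<open>{a. \<forall>\<epsilon>>0. a + \<epsilon> \<in> Q}\<close> and \<open>s\<close>
  ranging over the elements that preserve that closure. If \<open>-1 \<in> P\<close> then \<open>s f = 1 + q\<close>,
  and a descent along the archimedean bound of \<open>s\<close> puts \<open>f\<close> into \<open>Q\<close>. Otherwise Zorn's
  lemma extends \<open>P\<close> to a maximal quadratic module \<open>N\<close> with \<open>-1 \<notin> N\<close>, which is a semiordering
  (\<open>N \<union> -N = A\<close>); since \<open>N\<close> is archimedean, \<open>a \<mapsto> sup {r. a - r \<in> N}\<close> is a character,
  nonnegative on \<open>N \<supseteq> Q\<close> and nonpositive at \<open>f\<close>.

  Part (1) follows since every character in \<open>K_Y Q\<close> is a point evaluation; part (2) applies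
  the theorem to \<open>f + \<epsilon>\<close> and uses that \<open>{y. y f \<ge> 0}\<close> is closed in \<open>Y\<close>.\<close>

section \<open>Quadratic modules and their \<open>\<epsilon>\<close>-closure\<close>

lemma of_real_inverse_mult_cancel:
  "r \<noteq> 0 \<Longrightarrow> of_real (inverse r) * (of_real r * x) = (x::'a::real_algebra_1)"
  by (simp add: mult.assoc[symmetric] flip: of_real_mult)

lemma add_of_real_halves:
  "(a + of_real (\<epsilon>/2)) + (b + of_real (\<epsilon>/2)) = a + b + (of_real \<epsilon>::'a::real_algebra_1)"
  by (simp add: algebra_simps flip: of_real_add)

lemma power_two_pow_Suc: "(x::'a::monoid_mult)^(2^Suc K) = (x^(2^K))^2"
  by (subst power_Suc2) (rule power_mult)

lemma halving_identity:
  "(z::'a::{comm_ring_1,real_algebra_1}) - of_real c * ((1 - y) * m) + of_real (c/2) * ((1 - y)^2 * m)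
    = z - of_real (c/2) * ((1 - y^2) * m)"
proof -
  have "(of_real c :: 'a) = 2 * of_real (c/2)"
    using of_real_mult[of 2 "c/2", where 'a='a] by simp
  then show ?thesis
    by (simp add: algebra_simps power2_eq_square)
qed

definition eps_closure :: "'a::{comm_ring_1,real_algebra_1} set \<Rightarrow> 'a set" where
  "eps_closure Q = {a. \<forall>\<epsilon>>0. a + of_real \<epsilon> \<in> Q}"

locale qmodule =
  fixes Q :: "'a::{comm_ring_1,real_algebra_1} set"
  assumes quadratic_module: "quadratic_module Q"
begin

lemma add_mem: "p \<in> Q \<Longrightarrow> q \<in> Q \<Longrightarrow> p + q \<in> Q"
  using quadratic_module by (auto simp: quadratic_module_def)

lemma square_mult_mem: "q \<in> Q \<Longrightarrow> a^2 * q \<in> Q"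
  using quadratic_module by (auto simp: quadratic_module_def)

lemma one_mem: "1 \<in> Q"
  using quadratic_module by (auto simp: quadratic_module_def)

lemma square_mem: "a^2 \<in> Q"
  using square_mult_mem[OF one_mem, of a] by simp

lemma zero_mem: "0 \<in> Q"
  using square_mem[of 0] by simp

lemma of_real_mult_mem: "r \<ge> 0 \<Longrightarrow> q \<in> Q \<Longrightarrow> of_real r * q \<in> Q"
  using square_mult_mem[of q "of_real (sqrt r)"] by (simp flip: of_real_power)

lemma of_real_mem: "r \<ge> 0 \<Longrightarrow> of_real r \<in> Q"
  using of_real_mult_mem[OF _ one_mem] by simp

lemma add_of_real_mem: "q \<in> Q \<Longrightarrow> r \<ge> 0 \<Longrightarrow> q + of_real r \<in> Q"
  using add_mem of_real_mem by blast

lemma add_of_real_mono_mem: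
  assumes "of_real r + a \<in> Q" and "r \<le> s"
  shows "of_real s + a \<in> Q"
proof -
  have eq: "of_real s + a = (of_real r + a) + of_real (s - r)"
    by (simp add: algebra_simps)
  show ?thesis
    unfolding eq using assms by (intro add_of_real_mem) auto
qed

lemma of_real_mem_imp_nonneg:
  assumes "-1 \<notin> Q" and "of_real c \<in> Q"
  shows "c \<ge> 0"
proof (rule ccontr)
  assume "\<not> c \<ge> 0"
  then have "of_real (-1/c) * of_real c \<in> Q"
    using assms(2) by (intro of_real_mult_mem) auto
  moreover have "of_real (-1/c) * of_real c = (-1::'a)"
    using \<open>\<not> c \<ge> 0\<close> by (simp flip: of_real_mult)
  ultimately show False using assms(1) by simp
qed

lemma of_real_mult_mem_cancel:
  assumes "r > 0" and "of_real r * q \<in> Q"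
  shows "q \<in> Q"
proof -
  have eq: "of_real (inverse r) * (of_real r * q) = q"
    using assms(1) by (intro of_real_inverse_mult_cancel) simp
  have "of_real (inverse r) * (of_real r * q) \<in> Q"
    using assms by (intro of_real_mult_mem[of "inverse r"]) auto
  then show ?thesis by (simp only: eq)
qed

lemma diff_squares_mem:
  assumes "d > 0" and "of_real d + b \<in> Q" and "of_real d - b \<in> Q"
  shows "of_real (d^2) - b^2 \<in> Q"
proof -
  have "(of_real d - b)^2 * (of_real d + b) + (of_real d + b)^2 * (of_real d - b) \<in> Q"
    using assms by (blast intro: add_mem square_mult_mem)
  moreover have "(of_real d - b)^2 * (of_real d + b) + (of_real d + b)^2 * (of_real d - b)
      = of_real (2*d) * (of_real (d^2) - b^2)"
    by (simp add: algebra_simps power2_eq_square)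
  ultimately show ?thesis
    using of_real_mult_mem_cancel[of "2*d"] assms(1) by simp
qed

lemma subset_eps_closure: "Q \<subseteq> eps_closure Q"
  by (auto simp: eps_closure_def add_of_real_mem)

lemma eps_closure_add:
  assumes "a \<in> eps_closure Q" and "b \<in> eps_closure Q"
  shows "a + b \<in> eps_closure Q"
  unfolding eps_closure_def
proof (intro CollectI allI impI)
  fix \<epsilon> :: real assume "\<epsilon> > 0"
  then have "a + of_real (\<epsilon>/2) \<in> Q" "b + of_real (\<epsilon>/2) \<in> Q"
    using assms by (simp_all add: eps_closure_def)
  from add_mem[OF this] show "a + b + of_real \<epsilon> \<in> Q"
    by (simp only: add_of_real_halves)
qed

lemma eps_closure_of_real_mult:
  assumes "r \<ge> 0" and "a \<in> eps_closure Q"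
  shows "of_real r * a \<in> eps_closure Q"
  unfolding eps_closure_def
proof (intro CollectI allI impI)
  fix \<epsilon> :: real assume "\<epsilon> > 0"
  show "of_real r * a + of_real \<epsilon> \<in> Q"
  proof (cases "r = 0")
    case True
    then show ?thesis using of_real_mem \<open>\<epsilon> > 0\<close> by simp
  next
    case False
    then have "of_real r * (a + of_real (\<epsilon>/r)) \<in> Q"
      using assms \<open>\<epsilon> > 0\<close> by (intro of_real_mult_mem) (auto simp: eps_closure_def)
    then show ?thesis
      using False by (simp add: algebra_simps flip: of_real_mult)
  qed
qed

lemma eps_closure_if_add_of_real:
  assumes "\<And>\<delta>. \<delta> > 0 \<Longrightarrow> a + of_real \<delta> \<in> eps_closure Q"
  shows "a \<in> eps_closure Q"
  unfolding eps_closure_def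
proof (intro CollectI allI impI)
  fix \<epsilon> :: real assume "\<epsilon> > 0"
  then have "a + of_real (\<epsilon>/2) + of_real (\<epsilon>/2) \<in> Q"
    using assms[of "\<epsilon>/2"] unfolding eps_closure_def by (auto dest: spec[of _ "\<epsilon>/2"])
  moreover have "a + of_real (\<epsilon>/2) + of_real (\<epsilon>/2) = a + of_real \<epsilon>"
    by (simp add: algebra_simps flip: of_real_add)
  ultimately show "a + of_real \<epsilon> \<in> Q" by simp
qed

lemma eps_closure_of_real_mult_cancel:
  assumes "r > 0" and "of_real r * a \<in> eps_closure Q"
  shows "a \<in> eps_closure Q"
proof -
  have eq: "of_real (inverse r) * (of_real r * a) = a"
    using assms(1) by (intro of_real_inverse_mult_cancel) simp
  have "of_real (inverse r) * (of_real r * a) \<in> eps_closure Q"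
    using assms by (intro eps_closure_of_real_mult[of "inverse r"]) auto
  then show ?thesis by (simp only: eq)
qed

lemma eps_closure_add_neg_imp_mem:
  assumes "a + of_real t \<in> eps_closure Q" and "t < 0"
  shows "a \<in> Q"
  using assms by (auto simp: eps_closure_def dest: spec[of _ "-t"])

lemma of_real_eps_closure_imp_nonneg:
  assumes "-1 \<notin> Q" and "of_real c \<in> eps_closure Q"
  shows "c \<ge> 0"
proof (rule ccontr)
  assume "\<not> c \<ge> 0"
  then have "of_real (c + - c / 2) \<in> Q"
    using assms(2) unfolding eps_closure_def of_real_add by (auto dest: spec[of _ "- c / 2"])
  then have "c + - c / 2 \<ge> 0"
    by (rule of_real_mem_imp_nonneg[OF assms(1)])
  with \<open>\<not> c \<ge> 0\<close> show False by simp
qed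

lemma eps_closure_minus_square:
  assumes "b \<in> eps_closure Q" and "-b \<in> eps_closure Q"
  shows "-(b^2) \<in> eps_closure Q"
  unfolding eps_closure_def
proof (intro CollectI allI impI)
  fix \<epsilon> :: real assume "\<epsilon> > 0"
  then have "of_real (sqrt \<epsilon>) + b \<in> Q" "of_real (sqrt \<epsilon>) - b \<in> Q"
    using assms by (auto simp: eps_closure_def algebra_simps)
  then have "of_real ((sqrt \<epsilon>)^2) - b^2 \<in> Q"
    using \<open>\<epsilon> > 0\<close> by (intro diff_squares_mem) auto
  then show "-(b^2) + of_real \<epsilon> \<in> Q"
    using \<open>\<epsilon> > 0\<close> by (simp add: algebra_simps)
qed

text \<open>The support \<open>Q \<inter> -Q\<close> is an ideal, since \<open>b = ((b+1)/2)\<^sup>2 - ((b-1)/2)\<^sup>2\<close>.\<close>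
lemma support_mult_mem:
  assumes "p \<in> Q" and "-p \<in> Q"
  shows "b * p \<in> Q"
proof -
  define u v where "u = of_real (1/2) * (b + 1)" and "v = of_real (1/2) * (b - 1)"
  have "u^2 - v^2 = of_real (inverse 4) * (of_real 4 * b)"
    by (simp add: u_def v_def power_mult_distrib power2_eq_square algebra_simps
        flip: of_real_power of_real_mult)
  also have "\<dots> = b"
    by (rule of_real_inverse_mult_cancel) simp
  finally have "b * p = u^2 * p + v^2 * (-p)"
    by (simp add: algebra_simps)
  then show ?thesis using assms by (metis add_mem square_mult_mem)
qed

lemma one_minus_power_two_pow_mem:
  assumes "1 + x \<in> Q" and "1 - x \<in> Q"
  shows "1 - x^(2^K) \<in> Q \<and> 1 + x^(2^K) \<in> Q"
proof (induction K)
  case (Suc K)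
  then have "of_real (1^2) - (x^(2^K))^2 \<in> Q"
    by (intro diff_squares_mem) auto
  moreover have "1 + (x^(2^K))^2 \<in> Q"
    using add_mem[OF one_mem square_mem] .
  ultimately show ?case
    unfolding power_two_pow_Suc by simp
qed (use assms in simp)

text \<open>Each induction step halves the error term, since
  \<open>c (1 - y) - (c/2) (1 - y\<^sup>2) = (c/2) (1 - y)\<^sup>2\<close>.\<close>
lemma one_minus_mult_approx_mem:
  assumes "m \<in> Q"
  shows "(1 - x) * m - of_real ((1/2)^K) * ((1 - x^(2^K)) * m) \<in> Q"
proof (induction K)
  case 0
  then show ?case using zero_mem by simp
next
  case (Suc K)
  have "of_real ((1/2)^K / 2) * ((1 - x^(2^K))^2 * m) \<in> Q"
    using assms by (intro of_real_mult_mem square_mult_mem) auto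
  with Suc have "((1 - x) * m - of_real ((1/2)^K) * ((1 - x^(2^K)) * m))
      + of_real ((1/2)^K / 2) * ((1 - x^(2^K))^2 * m) \<in> Q"
    by (rule add_mem)
  moreover have "(1/2::real)^Suc K = (1/2)^K / 2"
    by simp
  ultimately show ?case
    unfolding power_two_pow_Suc by (simp only: halving_identity)
qed

text \<open>With \<open>m \<le> l\<close> and \<open>z\<^sup>2 \<le> 1\<close> in the order of \<open>Q\<close>, the error term \<open>c (1 - z\<^sup>2) m\<close>
  is bounded by \<open>c m + c z\<^sup>2 (l - m) + c l (1 - z\<^sup>2) = c l\<close>.\<close>
lemma add_of_real_mem_if_error_le:
  assumes approx: "u - of_real c * ((1 - z^2) * m) \<in> Q"
    and "m \<in> Q" "of_real l - m \<in> Q" "1 - z^2 \<in> Q" "c \<ge> 0" "l \<ge> 0" "c * l \<le> \<epsilon>"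
  shows "u + of_real \<epsilon> \<in> Q"
proof -
  have "of_real c * m \<in> Q"
    using \<open>c \<ge> 0\<close> \<open>m \<in> Q\<close> by (rule of_real_mult_mem)
  moreover have "of_real c * (z^2 * (of_real l - m)) \<in> Q"
    using \<open>c \<ge> 0\<close> square_mult_mem[OF \<open>of_real l - m \<in> Q\<close>] by (rule of_real_mult_mem)
  moreover have "of_real (c * l) * (1 - z^2) \<in> Q"
    using assms by (intro of_real_mult_mem[of "c * l"]) auto
  moreover have "of_real (\<epsilon> - c * l) \<in> Q"
    using assms by (intro of_real_mem) simp
  ultimately have "(u - of_real c * ((1 - z^2) * m)) + of_real c * m
      + of_real c * (z^2 * (of_real l - m)) + of_real (c * l) * (1 - z^2)
      + of_real (\<epsilon> - c * l) \<in> Q"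
    using approx by (intro add_mem)
  moreover have "(u - of_real c * ((1 - z^2) * m)) + of_real c * m
      + of_real c * (z^2 * (of_real l - m)) + of_real (c * l) * (1 - z^2)
      + of_real (\<epsilon> - c * l) = u + of_real \<epsilon>"
    by (simp add: algebra_simps)
  ultimately show ?thesis
    by (simp only:)
qed

end

section \<open>Maximal proper quadratic modules are semiorderings\<close>

text \<open>These play the role of the sums of squares; defining them this way spares an inductive
  definition.\<close>
definition qm_multipliers :: "'a::{comm_ring_1,real_algebra_1} set" where
  "qm_multipliers = {s. \<forall>M. quadratic_module M \<longrightarrow> (\<forall>n\<in>M. s * n \<in> M)}"

lemma qm_multipliers_mult_mem:
  "quadratic_module M \<Longrightarrow> s \<in> qm_multipliers \<Longrightarrow> n \<in> M \<Longrightarrow> s * n \<in> M"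
  by (auto simp: qm_multipliers_def)

lemma square_in_qm_multipliers: "a^2 \<in> qm_multipliers"
  by (auto simp: qm_multipliers_def quadratic_module_def)

lemma qm_multipliers_add:
  "s \<in> qm_multipliers \<Longrightarrow> t \<in> qm_multipliers \<Longrightarrow> s + t \<in> qm_multipliers"
  by (auto simp: qm_multipliers_def quadratic_module_def distrib_right)

lemma qm_multipliers_square_mult: "s \<in> qm_multipliers \<Longrightarrow> a^2 * s \<in> qm_multipliers"
  by (auto simp: qm_multipliers_def quadratic_module_def mult.assoc)

lemma qm_multipliers_subset: "quadratic_module M \<Longrightarrow> qm_multipliers \<subseteq> M"
  using qm_multipliers_mult_mem[of M _ 1] by (auto simp: quadratic_module_def)

lemma quadratic_module_adjoin:
  assumes "quadratic_module N"
  shows "quadratic_module {n + s * a | n s. n \<in> N \<and> s \<in> qm_multipliers}"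
    (is "quadratic_module ?N'")
proof -
  interpret qmodule N by (rule qmodule.intro) (rule assms)
  show ?thesis
    unfolding quadratic_module_def
  proof (intro conjI ballI allI)
    fix p q assume "p \<in> ?N'" "q \<in> ?N'"
    then obtain n s n' s' where "p = n + s * a" "q = n' + s' * a"
      and "n \<in> N" "n' \<in> N" "s \<in> qm_multipliers" "s' \<in> qm_multipliers"
      by blast
    moreover have "p + q = (n + n') + (s + s') * a"
      unfolding \<open>p = n + s * a\<close> \<open>q = n' + s' * a\<close> by (simp add: algebra_simps)
    ultimately show "p + q \<in> ?N'"
      by (intro CollectI exI[of _ "n + n'"] exI[of _ "s + s'"]) (simp add: add_mem qm_multipliers_add)
  next
    fix b q assume "q \<in> ?N'"
    then obtain n s where "q = n + s * a" "n \<in> N" "s \<in> qm_multipliers" by blast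
    moreover have "b^2 * q = b^2 * n + (b^2 * s) * a"
      unfolding \<open>q = n + s * a\<close> by (simp add: algebra_simps)
    ultimately show "b^2 * q \<in> ?N'"
      by (intro CollectI exI[of _ "b^2 * n"] exI[of _ "b^2 * s"])
        (simp add: square_mult_mem qm_multipliers_square_mult)
  next
    show "1 \<in> ?N'"
      using one_mem square_in_qm_multipliers[of 0]
      by (intro CollectI exI[of _ 1] exI[of _ 0]) simp
  qed
qed

definition maximal_proper_qm :: "'a::{comm_ring_1,real_algebra_1} set \<Rightarrow> bool" where
  "maximal_proper_qm N \<longleftrightarrow> quadratic_module N \<and> -1 \<notin> N \<and>
     (\<forall>N'. quadratic_module N' \<longrightarrow> N \<subseteq> N' \<longrightarrow> -1 \<notin> N' \<longrightarrow> N' = N)"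

lemma maximal_proper_qmD:
  "maximal_proper_qm N \<Longrightarrow> quadratic_module N' \<Longrightarrow> N \<subseteq> N' \<Longrightarrow> -1 \<notin> N' \<Longrightarrow> N' = N"
  by (simp add: maximal_proper_qm_def)

lemma quadratic_module_Union_chain:
  assumes "C \<noteq> {}" and "\<And>N. N \<in> C \<Longrightarrow> quadratic_module N"
    and "\<And>M N. M \<in> C \<Longrightarrow> N \<in> C \<Longrightarrow> M \<subseteq> N \<or> N \<subseteq> M"
  shows "quadratic_module (\<Union>C)"
  unfolding quadratic_module_def
proof (intro conjI ballI allI)
  fix p q assume "p \<in> \<Union>C" "q \<in> \<Union>C"
  then obtain M N where MN: "M \<in> C" "N \<in> C" "p \<in> M" "q \<in> N" by blast
  have "p + q \<in> M \<union> N"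
    using assms(3)[OF MN(1,2)] MN(3,4)
      qmodule.add_mem[OF qmodule.intro, OF assms(2)[OF MN(1)], of p q]
      qmodule.add_mem[OF qmodule.intro, OF assms(2)[OF MN(2)], of p q]
    by blast
  with MN(1,2) show "p + q \<in> \<Union>C" by blast
next
  fix a q assume "q \<in> \<Union>C"
  then obtain M where "M \<in> C" "q \<in> M" by blast
  then show "a^2 * q \<in> \<Union>C"
    using qmodule.square_mult_mem[OF qmodule.intro, OF assms(2)] by blast
next
  obtain M where "M \<in> C" using assms(1) by blast
  then show "1 \<in> \<Union>C"
    using qmodule.one_mem[OF qmodule.intro, OF assms(2)] by blast
qed

lemma exists_maximal_proper_qm:
  assumes "quadratic_module P" and "-1 \<notin> P"
  shows "\<exists>N. P \<subseteq> N \<and> maximal_proper_qm N"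
proof -
  define A where "A = {N. quadratic_module N \<and> P \<subseteq> N \<and> -1 \<notin> N}"
  have "\<exists>M\<in>A. \<forall>N\<in>A. M \<subseteq> N \<longrightarrow> N = M"
  proof (rule subset_Zorn_nonempty)
    show "A \<noteq> {}" using assms unfolding A_def by blast
  next
    fix C assume "C \<noteq> {}" and "subset.chain A C"
    then have "quadratic_module (\<Union>C)"
      by (intro quadratic_module_Union_chain) (auto simp: A_def subset_chain_def)
    with \<open>C \<noteq> {}\<close> \<open>subset.chain A C\<close> show "\<Union>C \<in> A"
      by (auto simp: A_def subset_chain_def)
  qed
  then obtain N where "N \<in> A" and "\<forall>N'\<in>A. N \<subseteq> N' \<longrightarrow> N' = N" by blast
  then have "P \<subseteq> N" and "maximal_proper_qm N"
    unfolding A_def maximal_proper_qm_def by auto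
  then show ?thesis by blast
qed

lemma maximal_proper_qm_adjoin:
  assumes N: "maximal_proper_qm N" and "c \<notin> N"
  shows "\<exists>n s. n \<in> N \<and> s \<in> qm_multipliers \<and> -1 = n + s * c"
proof -
  let ?N' = "{n + s * c | n s. n \<in> N \<and> s \<in> qm_multipliers}"
  interpret qmodule N using N by (simp add: qmodule_def maximal_proper_qm_def)
  have "N \<subseteq> ?N'"
  proof
    fix n assume "n \<in> N"
    then show "n \<in> ?N'"
      using square_in_qm_multipliers[of 0] by (intro CollectI exI[of _ n] exI[of _ 0]) simp
  qed
  moreover have "c \<in> ?N'"
    using zero_mem square_in_qm_multipliers[of 1] by (intro CollectI exI[of _ 0] exI[of _ 1]) simp
  moreover have "?N' = N" if "-1 \<notin> ?N'"
    by (rule maximal_proper_qmD[OF N quadratic_module_adjoin[OF quadratic_module] \<open>N \<subseteq> ?N'\<close> that])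
  ultimately have "-1 \<in> ?N'"
    using \<open>c \<notin> N\<close> by blast
  then show ?thesis by blast
qed

text \<open>If neither \<open>a\<close> nor \<open>-a\<close> lies in \<open>N\<close>, maximality gives \<open>-1 = n\<^sub>1 + s\<^sub>1 a = n\<^sub>2 - s\<^sub>2 a\<close>.
  Eliminating \<open>a\<close> puts \<open>-s\<^sub>1\<close> into \<open>N\<close>, so \<open>s\<^sub>1\<close> lies in the support, an ideal;
  hence \<open>-1 = n\<^sub>1 + a s\<^sub>1 \<in> N\<close>.\<close>
lemma maximal_proper_qm_total:
  assumes N: "maximal_proper_qm N"
  shows "a \<in> N \<or> -a \<in> N"
proof (rule ccontr)
  interpret qmodule N using N by (simp add: qmodule_def maximal_proper_qm_def)
  assume "\<not> (a \<in> N \<or> -a \<in> N)"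
  then obtain n1 s1 n2 s2 where
    1: "n1 \<in> N" "s1 \<in> qm_multipliers" "-1 = n1 + s1 * a" and
    2: "n2 \<in> N" "s2 \<in> qm_multipliers" "-1 = n2 + s2 * (-a)"
    using maximal_proper_qm_adjoin[OF N, of a] maximal_proper_qm_adjoin[OF N, of "-a"] by blast
  have "s2 * n1 + s1 * n2 = -(s1 + s2)"
    using arg_cong2[OF 1(3) 2(3), of "\<lambda>u v. s2 * u + s1 * v"] by (simp add: algebra_simps)
  moreover have "s2 * n1 + s1 * n2 \<in> N"
    using 1 2 qm_multipliers_mult_mem[OF quadratic_module] add_mem by blast
  ultimately have "-s1 \<in> N"
    using add_mem[of "-(s1 + s2)" s2] qm_multipliers_subset[OF quadratic_module] 2(2) by auto
  then have "a * s1 \<in> N"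
    using support_mult_mem qm_multipliers_subset[OF quadratic_module] 1(2) by blast
  moreover have "-1 = n1 + a * s1"
    using 1(3) by (simp add: mult.commute)
  ultimately have "-1 \<in> N"
    using 1(1) add_mem by metis
  then show False using N by (simp add: maximal_proper_qm_def)
qed

section \<open>The character of an archimedean semiordering\<close>

locale arch_semiordering = qmodule N for N :: "'a::{comm_ring_1,real_algebra_1} set" +
  assumes minus_one_notin: "-1 \<notin> N"
    and total: "a \<in> N \<or> -a \<in> N"
    and bounded: "\<exists>r. of_real r + a \<in> N"
begin

definition approximates :: "'a \<Rightarrow> real \<Rightarrow> bool" where
  "approximates a c \<longleftrightarrow> a - of_real c \<in> eps_closure N \<and> of_real c - a \<in> eps_closure N"

definition val :: "'a \<Rightarrow> real" where
  "val a = Sup {r. a - of_real r \<in> N}"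

lemma approximates_val: "approximates a (val a)"
proof -
  let ?A = "{r. a - of_real r \<in> N}"
  obtain r where "of_real r + a \<in> N" using bounded by blast
  then have "-r \<in> ?A" by (simp add: algebra_simps)
  then have nonempty: "?A \<noteq> {}" by blast
  obtain s where s: "of_real s + (-a) \<in> N" using bounded by blast
  have "r \<le> s" if "r \<in> ?A" for r
  proof -
    have "(a - of_real r) + (of_real s + (-a)) = of_real (s - r)"
      by (simp add: algebra_simps)
    then have "of_real (s - r) \<in> N"
      using add_mem[OF _ s] that by fastforce
    then show "r \<le> s"
      using of_real_mem_imp_nonneg[OF minus_one_notin] by fastforce
  qed
  then have bdd: "bdd_above ?A" by (auto simp: bdd_above_def)
  have "a - of_real (Sup ?A) + of_real \<epsilon> \<in> N" if "\<epsilon> > 0" for \<epsilon>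
  proof -
    obtain r where r: "r \<in> ?A" "Sup ?A - \<epsilon> < r"
      using less_cSup_iff[OF nonempty bdd, of "Sup ?A - \<epsilon>"] \<open>\<epsilon> > 0\<close> by auto
    have eq: "a - of_real (Sup ?A) + of_real \<epsilon> = (a - of_real r) + of_real (r - Sup ?A + \<epsilon>)"
      by (simp add: algebra_simps)
    have "(a - of_real r) + of_real (r - Sup ?A + \<epsilon>) \<in> N"
      using r by (intro add_of_real_mem) auto
    then show ?thesis by (simp only: eq)
  qed
  moreover have "of_real (Sup ?A) - a + of_real \<epsilon> \<in> N" if "\<epsilon> > 0" for \<epsilon>
  proof -
    have "Sup ?A + \<epsilon> \<notin> ?A"
      using cSup_upper[OF _ bdd, of "Sup ?A + \<epsilon>"] \<open>\<epsilon> > 0\<close> by auto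
    then show ?thesis
      using total[of "a - of_real (Sup ?A + \<epsilon>)"] by (simp add: algebra_simps)
  qed
  ultimately show ?thesis
    by (simp add: approximates_def eps_closure_def val_def)
qed

lemma approximates_unique:
  assumes "approximates a c" and "approximates a d"
  shows "c = d"
proof -
  have "(a - of_real c) + (of_real d - a) \<in> eps_closure N"
       "(a - of_real d) + (of_real c - a) \<in> eps_closure N"
    using assms unfolding approximates_def by (blast intro: eps_closure_add)+
  moreover have "(a - of_real c) + (of_real d - a) = of_real (d - c)"
    "(a - of_real d) + (of_real c - a) = of_real (c - d)"
    by (simp_all add: algebra_simps)
  ultimately have "of_real (d - c) \<in> eps_closure N" "of_real (c - d) \<in> eps_closure N"
    by (simp_all only:)
  then have "d - c \<ge> 0" "c - d \<ge> 0"
    by (blast intro: of_real_eps_closure_imp_nonneg[OF minus_one_notin])+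
  then show ?thesis by simp
qed

lemma val_eqI: "approximates a c \<Longrightarrow> val a = c"
  using approximates_unique[OF approximates_val] .

lemma approximates_add:
  assumes "approximates a c" and "approximates b d"
  shows "approximates (a + b) (c + d)"
proof -
  have "(a - of_real c) + (b - of_real d) \<in> eps_closure N"
       "(of_real c - a) + (of_real d - b) \<in> eps_closure N"
    using assms by (auto simp: approximates_def intro: eps_closure_add)
  then show ?thesis
    by (simp add: approximates_def algebra_simps)
qed

lemma approximates_uminus: "approximates a c \<Longrightarrow> approximates (-a) (-c)"
  by (simp add: approximates_def algebra_simps)

lemma approximates_of_real: "approximates (of_real r) r"
  using subset_eps_closure zero_mem by (auto simp: approximates_def)

lemma approximates_nonneg_mult:
  assumes "r \<ge> 0" and "approximates a c"
  shows "approximates (of_real r * a) (r * c)"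
proof -
  have "of_real r * (a - of_real c) \<in> eps_closure N" "of_real r * (of_real c - a) \<in> eps_closure N"
    using assms by (auto simp: approximates_def intro: eps_closure_of_real_mult)
  then show ?thesis
    by (simp add: approximates_def algebra_simps)
qed

lemma approximates_of_real_mult:
  assumes "approximates a c"
  shows "approximates (of_real r * a) (r * c)"
proof (cases "r \<ge> 0")
  case False
  then have "approximates (of_real (-r) * (-a)) ((-r) * (-c))"
    using assms by (intro approximates_nonneg_mult approximates_uminus) auto
  then show ?thesis by simp
qed (use assms approximates_nonneg_mult in auto)

lemma approximates_square_zero: "approximates b 0 \<Longrightarrow> approximates (b^2) 0"
  using subset_eps_closure square_mem eps_closure_minus_square
  by (auto simp: approximates_def)

lemma val_add: "val (a + b) = val a + val b"
  by (intro val_eqI approximates_add approximates_val)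

lemma val_uminus: "val (-a) = - val a"
  by (intro val_eqI approximates_uminus approximates_val)

lemma val_of_real_mult: "val (of_real r * a) = r * val a"
  by (intro val_eqI approximates_of_real_mult approximates_val)

lemma val_of_real: "val (of_real r) = r"
  by (intro val_eqI approximates_of_real)

lemma val_diff: "val (a - b) = val a - val b"
  by (simp only: diff_conv_add_uminus val_add val_uminus)

lemma val_square: "val (a^2) = (val a)^2"
proof -
  define c where "c = val a"
  define b where "b = a - of_real c"
  have "approximates b 0"
    using approximates_val[of a] by (simp add: approximates_def b_def c_def)
  then have "val b = 0" "val (b^2) = 0"
    using val_eqI approximates_square_zero by simp_all
  have "a^2 = b^2 + of_real (2 * c) * b + of_real (c^2)"
    by (simp add: b_def power2_eq_square algebra_simps)
  then have "val (a^2) = val (b^2) + (2 * c) * val b + c^2"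
    by (simp only: val_add val_of_real_mult val_of_real)
  also have "\<dots> = (val a)^2"
    by (simp add: \<open>val b = 0\<close> \<open>val (b^2) = 0\<close> c_def)
  finally show ?thesis .
qed

lemma val_mult: "val (a * b) = val a * val b"
proof -
  have "(a + b)^2 - (a - b)^2 = of_real 4 * (a * b)"
    by (simp add: power2_eq_square algebra_simps)
  then have "a * b = of_real (inverse 4) * ((a + b)^2 - (a - b)^2)"
    using of_real_inverse_mult_cancel[of 4 "a * b"] by simp
  then have "val (a * b) = inverse 4 * ((val a + val b)^2 - (val a - val b)^2)"
    by (simp only: val_of_real_mult val_diff val_add val_square)
  then show ?thesis
    by (simp add: power2_eq_square algebra_simps)
qed

lemma val_nonneg: "g \<in> N \<Longrightarrow> val g \<ge> 0"
  using approximates_val[of g] subset_eps_closure eps_closure_add[of "of_real (val g) - g" g]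
    of_real_eps_closure_imp_nonneg[OF minus_one_notin]
  by (force simp: approximates_def)

lemma val_in_char_space: "val \<in> char_space"
  unfolding char_space_def
proof (intro CollectI conjI allI)
  show "val (r *\<^sub>R a) = r * val a" for r a
    by (simp only: scaleR_conv_of_real val_of_real_mult)
  show "val 1 = 1"
    using val_of_real[of 1] by (simp only: of_real_1)
qed (simp_all only: val_add val_mult)

end

section \<open>Jacobi's representation theorem\<close>

definition eps_multipliers :: "'a::{comm_ring_1,real_algebra_1} set \<Rightarrow> 'a set" where
  "eps_multipliers Q = {c. \<forall>m\<in>Q. c * m \<in> eps_closure Q}"

locale arch_qmodule = qmodule +
  assumes archimedean: "archimedean_qm Q"
begin

lemma archimedean_of_real: "\<exists>r\<ge>1. of_real r + a \<in> Q"
proof -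
  obtain n :: nat where "n \<ge> 1" "of_nat n + a \<in> Q"
    using archimedean unfolding archimedean_qm_def by blast
  then show ?thesis by (intro exI[of _ "real n"]) simp
qed

lemma archimedean_of_real_both: "\<exists>r\<ge>1. of_real r + a \<in> Q \<and> of_real r - a \<in> Q"
proof -
  obtain r s where "r \<ge> 1" "of_real r + a \<in> Q" "of_real s + (-a) \<in> Q"
    using archimedean_of_real by meson
  then have "of_real (max r s) + a \<in> Q" "of_real (max r s) + (-a) \<in> Q"
    by (blast intro: add_of_real_mono_mem max.cobounded1 max.cobounded2)+
  with \<open>r \<ge> 1\<close> show ?thesis
    by (intro exI[of _ "max r s"]) simp
qed

lemma square_in_eps_multipliers: "b^2 \<in> eps_multipliers Q"
  using square_mult_mem subset_eps_closure by (auto simp: eps_multipliers_def mult.commute)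

lemma eps_multipliers_add:
  "c \<in> eps_multipliers Q \<Longrightarrow> d \<in> eps_multipliers Q \<Longrightarrow> c + d \<in> eps_multipliers Q"
  using eps_closure_add by (auto simp: eps_multipliers_def distrib_right)

lemma eps_multipliers_square_mult:
  "c \<in> eps_multipliers Q \<Longrightarrow> b^2 * c \<in> eps_multipliers Q"
  using square_mult_mem by (auto simp: eps_multipliers_def mult.left_commute mult.assoc)

lemma eps_multipliers_of_real_mult:
  "r \<ge> 0 \<Longrightarrow> c \<in> eps_multipliers Q \<Longrightarrow> of_real r * c \<in> eps_multipliers Q"
  using eps_closure_of_real_mult by (auto simp: eps_multipliers_def mult.assoc)

lemma eps_multiplier_in_eps_closure: "c \<in> eps_multipliers Q \<Longrightarrow> c \<in> eps_closure Q"
  using one_mem by (auto simp: eps_multipliers_def dest: bspec[of _ _ 1])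

lemma eps_multiplier_mult_eps_closure:
  assumes c: "c \<in> eps_multipliers Q" and a: "a \<in> eps_closure Q"
  shows "c * a \<in> eps_closure Q"
proof (rule eps_closure_if_add_of_real)
  fix \<delta> :: real assume "\<delta> > 0"
  obtain k where k: "k \<ge> 1" "of_real k + (-c) \<in> Q"
    using archimedean_of_real by blast
  have "a + of_real (\<delta>/k) \<in> Q"
    using a \<open>\<delta> > 0\<close> k(1) by (simp add: eps_closure_def)
  then have "c * (a + of_real (\<delta>/k)) \<in> eps_closure Q"
    using c by (simp add: eps_multipliers_def)
  moreover have "of_real (\<delta>/k) * (of_real k + (-c)) \<in> Q"
    using k \<open>\<delta> > 0\<close> by (intro of_real_mult_mem) auto
  then have "of_real (\<delta>/k) * (of_real k + (-c)) \<in> eps_closure Q"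
    using subset_eps_closure by blast
  ultimately have "c * (a + of_real (\<delta>/k)) + of_real (\<delta>/k) * (of_real k + (-c)) \<in> eps_closure Q"
    by (rule eps_closure_add)
  moreover have "c * (a + of_real (\<delta>/k)) + of_real (\<delta>/k) * (of_real k + (-c)) = c * a + of_real \<delta>"
    using k(1) by (simp add: algebra_simps flip: of_real_mult)
  ultimately show "c * a + of_real \<delta> \<in> eps_closure Q" by simp
qed

lemma eps_closure_square_mult: "a \<in> eps_closure Q \<Longrightarrow> b^2 * a \<in> eps_closure Q"
  by (rule eps_multiplier_mult_eps_closure[OF square_in_eps_multipliers])

lemma one_minus_in_eps_multipliers:
  assumes "1 + x \<in> Q" and "1 - x \<in> Q"
  shows "1 - x \<in> eps_multipliers Q"
  unfolding eps_multipliers_def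
proof (intro CollectI ballI, rule eps_closure_if_add_of_real)
  fix m and \<epsilon> :: real assume m: "m \<in> Q" and "\<epsilon> > 0"
  obtain l where l: "l \<ge> 1" "of_real l - m \<in> Q"
    using archimedean_of_real[of "-m"] by auto
  obtain K where K: "(1/2::real)^K < \<epsilon>/l"
    using real_arch_pow_inv[of "\<epsilon>/l" "1/2"] \<open>\<epsilon> > 0\<close> l(1) by auto
  define c where "c = (1/2::real)^Suc K"
  define z where "z = x^(2^K)"
  have "c \<ge> 0" "c * l \<le> \<epsilon>"
    using K l(1) by (auto simp: c_def field_simps)
  moreover have "(1 - x) * m - of_real c * ((1 - z^2) * m) \<in> Q"
    using one_minus_mult_approx_mem[OF m, of x "Suc K"] unfolding c_def z_def power_two_pow_Suc .
  moreover have "1 - z^2 \<in> Q"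
    using one_minus_power_two_pow_mem[OF assms, of "Suc K"] unfolding z_def power_two_pow_Suc by blast
  ultimately have "(1 - x) * m + of_real \<epsilon> \<in> Q"
    using m l by (intro add_of_real_mem_if_error_le) auto
  then show "(1 - x) * m + of_real \<epsilon> \<in> eps_closure Q"
    using subset_eps_closure by blast
qed

lemma eps_multipliers_archimedean: "\<exists>r\<ge>1. of_real r + a \<in> eps_multipliers Q"
proof -
  obtain r where r: "r \<ge> 1" "of_real r + a \<in> Q" "of_real r - a \<in> Q"
    using archimedean_of_real_both by blast
  define x where "x = - of_real (inverse r) * a"
  have "of_real (inverse r) * (of_real r - a) \<in> Q" "of_real (inverse r) * (of_real r + a) \<in> Q"
    using r by (auto intro: of_real_mult_mem)
  moreover have "of_real (inverse r) * (of_real r - a) = 1 + x"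
    "of_real (inverse r) * (of_real r + a) = 1 - x"
    using r(1) by (simp_all add: x_def algebra_simps flip: of_real_mult)
  ultimately have "1 - x \<in> eps_multipliers Q"
    by (intro one_minus_in_eps_multipliers) simp_all
  then have "of_real r * (1 - x) \<in> eps_multipliers Q"
    using r(1) by (intro eps_multipliers_of_real_mult) auto
  moreover have "of_real r * (1 - x) = of_real r + a"
    using r(1) by (simp add: x_def algebra_simps flip: of_real_mult)
  ultimately show ?thesis
    using r(1) by auto
qed

text \<open>From \<open>s f = 1 + q\<close>: \<open>(k - s) (f + t) + q + t s = k (f + t - 1/k)\<close>. Iterating this step
  from \<open>f + n \<in> Q\<close> drives \<open>t\<close> below zero, which is impossible unless \<open>f \<in> Q\<close>.\<close>
lemma eps_closure_descent_step:
  assumes s: "s \<in> eps_multipliers Q" and q: "q \<in> eps_closure Q" and eq: "s * f = 1 + q"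
    and k: "k > 0" "of_real k + (-s) \<in> eps_multipliers Q"
    and t: "t \<ge> 0" "f + of_real t \<in> eps_closure Q"
  shows "f + of_real (t - 1/k) \<in> eps_closure Q"
proof -
  have "(of_real k + (-s)) * (f + of_real t) \<in> eps_closure Q"
    using eps_multiplier_mult_eps_closure[OF k(2) t(2)] .
  moreover have "of_real t * s \<in> eps_closure Q"
    using eps_multiplier_in_eps_closure[OF eps_multipliers_of_real_mult[OF t(1) s]] .
  ultimately have "(of_real k + (-s)) * (f + of_real t) + q + of_real t * s \<in> eps_closure Q"
    using q by (intro eps_closure_add)
  moreover have "(of_real k + (-s)) * (f + of_real t) + q + of_real t * s
      = of_real k * (f + of_real (t - 1/k))"
  proof -
    have "(of_real k + (-s)) * (f + of_real t) + q + of_real t * s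
        = of_real k * f + of_real (k * t - 1)"
      using eq by (simp add: algebra_simps)
    also have "\<dots> = of_real k * (f + of_real (t - 1/k))"
      using k(1) by (simp add: algebra_simps flip: of_real_mult)
    finally show ?thesis .
  qed
  ultimately have "of_real k * (f + of_real (t - 1/k)) \<in> eps_closure Q"
    by (simp only:)
  then show ?thesis
    using k(1) by (rule eps_closure_of_real_mult_cancel[rotated])
qed

lemma mem_if_eps_multiplier_eq:
  assumes s: "s \<in> eps_multipliers Q" and q: "q \<in> eps_closure Q" and eq: "s * f = 1 + q"
  shows "f \<in> Q"
proof (rule ccontr)
  assume "f \<notin> Q"
  obtain k where k: "k \<ge> 1" "of_real k + (-s) \<in> eps_multipliers Q"
    using eps_multipliers_archimedean by blast
  obtain n where n: "of_real n + f \<in> Q"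
    using archimedean_of_real by blast
  have descent: "f + of_real (n - j/k) \<in> eps_closure Q" for j :: nat
  proof (induction j)
    case 0
    then show ?case using n subset_eps_closure by (auto simp: add.commute)
  next
    case (Suc j)
    have "n - j/k \<ge> 0"
      using eps_closure_add_neg_imp_mem[OF Suc] \<open>f \<notin> Q\<close> by force
    then have "f + of_real (n - j/k - 1/k) \<in> eps_closure Q"
      using eps_closure_descent_step[OF s q eq _ k(2) _ Suc] k(1) by simp
    moreover have "n - j/k - 1/k = n - Suc j/k"
      by (simp add: add_divide_distrib)
    ultimately show ?case by simp
  qed
  obtain j :: nat where "n * k < j"
    using reals_Archimedean2 by blast
  then have "n - j/k < 0"
    using k(1) by (simp add: field_simps)
  then show False
    using eps_closure_add_neg_imp_mem[OF descent] \<open>f \<notin> Q\<close> by blast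
qed

lemma quadratic_module_eps_closure_diff:
  "quadratic_module {q - s * f | q s. q \<in> eps_closure Q \<and> s \<in> eps_multipliers Q}"
  (is "quadratic_module ?P")
  unfolding quadratic_module_def
proof (intro conjI ballI allI)
  fix p p' assume "p \<in> ?P" "p' \<in> ?P"
  then obtain q s q' s' where "p = q - s * f" "p' = q' - s' * f"
    and "q \<in> eps_closure Q" "q' \<in> eps_closure Q" "s \<in> eps_multipliers Q" "s' \<in> eps_multipliers Q"
    by blast
  moreover have "p + p' = (q + q') - (s + s') * f"
    unfolding \<open>p = q - s * f\<close> \<open>p' = q' - s' * f\<close> by (simp add: algebra_simps)
  ultimately show "p + p' \<in> ?P"
    by (intro CollectI exI[of _ "q + q'"] exI[of _ "s + s'"])
      (simp add: eps_closure_add eps_multipliers_add)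
next
  fix b p assume "p \<in> ?P"
  then obtain q s where "p = q - s * f" "q \<in> eps_closure Q" "s \<in> eps_multipliers Q"
    by blast
  moreover have "b^2 * p = b^2 * q - (b^2 * s) * f"
    unfolding \<open>p = q - s * f\<close> by (simp add: algebra_simps)
  ultimately show "b^2 * p \<in> ?P"
    by (intro CollectI exI[of _ "b^2 * q"] exI[of _ "b^2 * s"])
      (simp add: eps_closure_square_mult eps_multipliers_square_mult)
next
  show "1 \<in> ?P"
    using subset_eps_closure one_mem square_in_eps_multipliers[of 0]
    by (intro CollectI exI[of _ 1] exI[of _ 0]) auto
qed

theorem exists_character_nonpos:
  assumes "f \<notin> Q"
  shows "\<exists>y\<in>K_Y Q. y f \<le> 0"
proof -
  let ?P = "{q - s * f | q s. q \<in> eps_closure Q \<and> s \<in> eps_multipliers Q}"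
  have "Q \<subseteq> ?P"
  proof
    fix q assume "q \<in> Q"
    then show "q \<in> ?P"
      using subset_eps_closure square_in_eps_multipliers[of 0]
      by (intro CollectI exI[of _ q] exI[of _ 0]) auto
  qed
  have "-f \<in> ?P"
    using subset_eps_closure zero_mem square_in_eps_multipliers[of 1]
    by (intro CollectI exI[of _ 0] exI[of _ 1]) auto
  have "-1 \<notin> ?P"
  proof
    assume "-1 \<in> ?P"
    then obtain q s where "-1 = q - s * f" "q \<in> eps_closure Q" "s \<in> eps_multipliers Q"
      by blast
    moreover from \<open>-1 = q - s * f\<close> have "s * f = 1 + q"
      by (simp add: algebra_simps)
    ultimately show False
      using mem_if_eps_multiplier_eq assms by blast
  qed
  obtain N where "?P \<subseteq> N" and N: "maximal_proper_qm N"
    using exists_maximal_proper_qm[OF quadratic_module_eps_closure_diff \<open>-1 \<notin> ?P\<close>] by blast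
  with \<open>Q \<subseteq> ?P\<close> have "Q \<subseteq> N" by blast
  have "arch_semiordering N"
  proof unfold_locales
    show "quadratic_module N" "-1 \<notin> N"
      using N by (simp_all add: maximal_proper_qm_def)
    show "a \<in> N \<or> -a \<in> N" for a
      by (rule maximal_proper_qm_total[OF N])
    show "\<exists>r. of_real r + a \<in> N" for a
      using archimedean_of_real \<open>Q \<subseteq> N\<close> by blast
  qed
  then interpret N: arch_semiordering N .
  have "N.val \<in> K_Y Q"
    using N.val_in_char_space N.val_nonneg \<open>Q \<subseteq> N\<close> by (auto simp: K_Y_def)
  moreover have "N.val f \<le> 0"
    using N.val_nonneg[of "-f"] \<open>-f \<in> ?P\<close> \<open>?P \<subseteq> N\<close> by (auto simp: N.val_uminus)
  ultimately show ?thesis by blast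
qed

end

section \<open>Positivity on \<open>K_X\<close>\<close>

lemma char_space_of_real:
  assumes "y \<in> char_space"
  shows "y (of_real r) = r"
proof -
  have "y (r *\<^sub>R 1) = r * y 1" "y 1 = 1"
    using assms unfolding char_space_def by blast+
  then show ?thesis
    unfolding of_real_def by simp
qed

lemma closedin_char_space_nonneg:
  "closedin (top_of_set char_space) {y \<in> char_space. y f \<ge> 0}"
  unfolding closedin_subtopology
  by (intro exI[of _ "{y. y f \<ge> 0}"] conjI)
    (auto intro!: closed_Collect_le continuous_on_product_coordinates)

context arch_qmodule
begin

lemma mem_if_pos_on_K_X:
  assumes "evmap bar ` K_X Q X bar = K_Y Q" and pos: "\<forall>x\<in>K_X Q X bar. bar f x > 0"
  shows "f \<in> Q"
proof (rule ccontr)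
  assume "f \<notin> Q"
  then obtain y where "y \<in> K_Y Q" "y f \<le> 0"
    using exists_character_nonpos by blast
  moreover from \<open>y \<in> K_Y Q\<close> obtain x where "x \<in> K_X Q X bar" "y = evmap bar x"
    using assms(1) by (metis imageE)
  ultimately show False
    using pos by (auto simp: evmap_def)
qed

lemma add_of_real_mem_if_nonneg_on_K_X:
  assumes "alg_hom_to_funs X bar"
    and K: "top_of_set char_space closure_of (evmap bar ` K_X Q X bar) = K_Y Q"
    and nonneg: "\<forall>x\<in>K_X Q X bar. bar f x \<ge> 0" and "\<epsilon> > 0"
  shows "f + of_real \<epsilon> \<in> Q"
proof (rule ccontr)
  assume "f + of_real \<epsilon> \<notin> Q"
  then obtain y where y: "y \<in> K_Y Q" "y (f + of_real \<epsilon>) \<le> 0"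
    using exists_character_nonpos by blast
  then have "y \<in> char_space"
    by (simp add: K_Y_def)
  with y(2) \<open>\<epsilon> > 0\<close> have "y f < 0"
    using char_space_of_real[of y \<epsilon>] by (simp add: char_space_def)
  have "evmap bar ` K_X Q X bar \<subseteq> {y \<in> char_space. y f \<ge> 0}"
    using assms(1) nonneg by (auto simp: evmap_def K_X_def char_space_def alg_hom_to_funs_def)
  then have "K_Y Q \<subseteq> {y \<in> char_space. y f \<ge> 0}"
    using closure_of_minimal[OF _ closedin_char_space_nonneg] K by blast
  with y(1) \<open>y f < 0\<close> show False by auto
qed

end

theorem theorem1p1:
  fixes X :: "'x set" and bar :: "'a::{comm_ring_1,real_algebra_1} \<Rightarrow> 'x \<Rightarrow> real"
    and Q :: "'a set"
  assumes "alg_hom_to_funs X bar"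
    and "quadratic_module Q" and "archimedean_qm Q"
  shows "(evmap bar ` K_X Q X bar = K_Y Q \<longrightarrow>
            (\<forall>f. (\<forall>x\<in>K_X Q X bar. bar f x > 0) \<longrightarrow> f \<in> Q))
       \<and> ((top_of_set char_space) closure_of (evmap bar ` K_X Q X bar) = K_Y Q \<longrightarrow>
            (\<forall>f. (\<forall>x\<in>K_X Q X bar. bar f x \<ge> 0) \<longrightarrow> (\<forall>\<epsilon>::real. \<epsilon> > 0 \<longrightarrow> f + of_real \<epsilon> \<in> Q)))"
proof -
  interpret arch_qmodule Q
    using assms(2,3) by (simp add: arch_qmodule_def arch_qmodule_axioms_def qmodule_def)
  show ?thesis
    using mem_if_pos_on_K_X add_of_real_mem_if_nonneg_on_K_X[OF assms(1)] by blast
qed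

end
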